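(* Let $G$ be a finite additive abelian group of order $v$ and suppose there exists a difference family DF$(v,k,\lambda)$ over $G$ (with $2\le k\le v$). Then there exists an authentication system with $k$ source states, $v$ messages and $b=\lambda v(v-1)/(k^2-k)$ encoding rules which, when the source states are equiprobable and the encoding rules are used with equal probability, has perfect secrecy and is onefold secure against spoofing. Moreover, the system is optimal (i.e. $b=v(v-1)/(k(k-1))$) if and only if $\lambda=1$.
   Context: A difference family DF$(v,k,\lambda)$ over an additive abelian group $G$ of order $v$ is a family $\{D_1,\dots,D_l\}$ of $k$-subsets of $G$ such that the multiset $\bigcup_{i=1}^l\{x-y: x,y\in D_i,\ x\ne y\}$ contains every nonzero element of $G$ exactly $\lambda$ times. Authentication system: finite sets $\mathcal{S}$ of $k$ source states, $\mathcal{M}$ of $v$ messages, $\mathcal{E}$ of $b$ encoding rules, each $e\in\mathcal{E}$ an injective map $\mathcal{S}\to\mathcal{M}$; $M(e)=\{e(s):s\in\mathcal{S}\}$ is the set of messages valid (accepted) under $e$. A key $e$ is drawn according to a distribution $p_E$ on $\mathcal{E}$, source states according to $p_S$, independently; "equiprobable source states" means source states are independent and uniformly distributed, and for each $i$ every $i$-subset of distinct source states is equally likely to be the set of sent source states. Perfect secrecy: $p_S(s\mid m)=p_S(s)$ for every $s\in\mathcal{S}$ and every message $m$. Spoofing attack of order $i$: the opponent observes $i\ge 0$ distinct messages produced from $i$ distinct source states under the same secret key $e$, and then sends a new message distinct from these; he succeeds if it lies in $M(e)$. The deception probability $P_{d_i}$ is the maximum success probability over all opponent strategies. The system is called $t$-fold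 secure against spoofing if $P_{d_i}=(k-i)/(v-i)$ for all $0\le i\le t$. A onefold secure system always has $b\ge \binom{v}{2}/\binom{k}{2}$; it is called optimal when equality holds. *)

theory Defs
  imports Complex_Main
begin

text \<open>A difference family DF(v,k,lambda) over a finite additive abelian group G
  (here: the finite type 'g, so v = card (UNIV :: 'g set)) is a nonempty family (list, so that
  repeated base blocks are allowed) D_1,...,D_l of k-subsets such that every nonzero
  element g occurs exactly lambda times as a difference x - y, x,y in D_i, x ~= y,
  counted with multiplicity over all blocks.\<close>

definition difference_family ::
  "'g::{ab_group_add,finite} set list \<Rightarrow> nat \<Rightarrow> nat \<Rightarrow> nat \<Rightarrow> bool" where
  "difference_family Ds v k lam \<longleftrightarrow>
     v = card (UNIV :: 'g set) \<and> Ds \<noteq> [] \<and>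
     (\<forall>D\<in>set Ds. card D = k) \<and>
     (\<forall>g::'g. g \<noteq> 0 \<longrightarrow>
        (\<Sum>D\<leftarrow>Ds. card {(x, y). x \<in> D \<and> y \<in> D \<and> x \<noteq> y \<and> x - y = g}) = lam)"

definition auth_system :: "'s set \<Rightarrow> 'm set \<Rightarrow> 'e set \<Rightarrow> ('e \<Rightarrow> 's \<Rightarrow> 'm) \<Rightarrow> bool" where
  "auth_system S M E f \<longleftrightarrow> finite S \<and> finite M \<and> finite E \<and>
     (\<forall>e\<in>E. f e ` S \<subseteq> M \<and> inj_on (f e) S)"

definition valid_msgs :: "'s set \<Rightarrow> ('e \<Rightarrow> 's \<Rightarrow> 'm) \<Rightarrow> 'e \<Rightarrow> 'm set" where
  "valid_msgs S f e = f e ` S"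

text \<open>Joint probability that source state s is sent and message m is produced
  (source and key drawn independently according to pS, pE).\<close>
definition joint_prob ::
  "'s set \<Rightarrow> 'e set \<Rightarrow> ('e \<Rightarrow> 's \<Rightarrow> 'm) \<Rightarrow> ('s \<Rightarrow> real) \<Rightarrow> ('e \<Rightarrow> real) \<Rightarrow> 's \<Rightarrow> 'm \<Rightarrow> real" where
  "joint_prob S E f pS pE s m = pS s * (\<Sum>e\<in>{e\<in>E. f e s = m}. pE e)"

definition msg_prob ::
  "'s set \<Rightarrow> 'e set \<Rightarrow> ('e \<Rightarrow> 's \<Rightarrow> 'm) \<Rightarrow> ('s \<Rightarrow> real) \<Rightarrow> ('e \<Rightarrow> real) \<Rightarrow> 'm \<Rightarrow> real" where
  "msg_prob S E f pS pE m = (\<Sum>s\<in>S. joint_prob S E f pS pE s m)"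

definition perfect_secrecy ::
  "'s set \<Rightarrow> 'm set \<Rightarrow> 'e set \<Rightarrow> ('e \<Rightarrow> 's \<Rightarrow> 'm) \<Rightarrow> ('s \<Rightarrow> real) \<Rightarrow> ('e \<Rightarrow> real) \<Rightarrow> bool" where
  "perfect_secrecy S M E f pS pE \<longleftrightarrow>
     (\<forall>s\<in>S. \<forall>m\<in>M. msg_prob S E f pS pE m > 0 \<longrightarrow>
        joint_prob S E f pS pE s m / msg_prob S E f pS pE m = pS s)"

text \<open>Spoofing attack of order i with equiprobable source states: the key e is
  drawn according to pE, the set T of i distinct sent source states is uniformly
  distributed among the i-subsets of S; the opponent observes the messages f e ` T
  and, using a strategy sigma, sends sigma (f e ` T), a message of M not among the
  observed ones. He succeeds iff it lies in M(e).\<close>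

definition spoof_strategies :: "'m set \<Rightarrow> nat \<Rightarrow> ('m set \<Rightarrow> 'm) set" where
  "spoof_strategies M i = {\<sigma>. \<forall>X. X \<subseteq> M \<and> card X = i \<longrightarrow> \<sigma> X \<in> M - X}"

definition spoof_success ::
  "'s set \<Rightarrow> 'e set \<Rightarrow> ('e \<Rightarrow> 's \<Rightarrow> 'm) \<Rightarrow> ('e \<Rightarrow> real) \<Rightarrow> nat \<Rightarrow> ('m set \<Rightarrow> 'm) \<Rightarrow> real" where
  "spoof_success S E f pE i \<sigma> =
     (\<Sum>e\<in>E. pE e * (\<Sum>T\<in>{T. T \<subseteq> S \<and> card T = i}.
        (1 / real (card S choose i)) *
        (if \<sigma> (f e ` T) \<in> valid_msgs S f e then 1 else 0)))"

definition deception_prob ::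
  "'s set \<Rightarrow> 'm set \<Rightarrow> 'e set \<Rightarrow> ('e \<Rightarrow> 's \<Rightarrow> 'm) \<Rightarrow> ('e \<Rightarrow> real) \<Rightarrow> nat \<Rightarrow> real" where
  "deception_prob S M E f pE i = (SUP \<sigma>\<in>spoof_strategies M i. spoof_success S E f pE i \<sigma>)"

definition t_fold_secure ::
  "'s set \<Rightarrow> 'm set \<Rightarrow> 'e set \<Rightarrow> ('e \<Rightarrow> 's \<Rightarrow> 'm) \<Rightarrow> ('e \<Rightarrow> real) \<Rightarrow> nat \<Rightarrow> bool" where
  "t_fold_secure S M E f pE t \<longleftrightarrow>
     (\<forall>i\<le>t. deception_prob S M E f pE i =
        (real (card S) - real i) / (real (card M) - real i))"

definition optimal_auth :: "'s set \<Rightarrow> 'm set \<Rightarrow> 'e set \<Rightarrow> bool" where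
  "optimal_auth S M E \<longleftrightarrow>
     real (card E) = real (card M choose 2) / real (card S choose 2)"

end

theory Submission
  imports Defs "HOL-Library.Cardinality"
begin

(* The encoding rules are the translates D_i + g of the base blocks (the development of the
   difference family), and rule (i, g) sends the s-th source state to the s-th element of
   D_i + g. For every source state and message exactly one translate of each block does this,
   which gives perfect secrecy. A message x lies in l k translates, and two distinct messages
   x, y lie together in as many translates as there are representations of x - y as a
   difference inside a block, i.e. in exactly lambda of them: the valid-message sets form a
   2-(v, k, lambda) design. With uniform keys the opponent therefore succeeds with probability
   l k / b = k / v without observations, and with probability lambda v / (b k) = (k - 1) / (v - 1)
   whatever message he substitutes for an observed one. Counting differences gives
   l k (k - 1) = lambda (v - 1), so b = l v = lambda v (v - 1) / (k (k - 1)), which equals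
   binom(v, 2) / binom(k, 2) iff lambda = 1. *)

definition diff_mult :: "'g::ab_group_add set \<Rightarrow> 'g \<Rightarrow> nat" where
  "diff_mult D g = card {(x, y). x \<in> D \<and> y \<in> D \<and> x \<noteq> y \<and> x - y = g}"

lemma card_translates_containing:
  fixes D :: "'g::ab_group_add set"
  shows "card {g. x - g \<in> D} = card D"
proof -
  have "bij_betw (\<lambda>g. x - g) {g. x - g \<in> D} D"
    by (rule bij_betw_byWitness[where f' = "\<lambda>a. x - a"]) auto
  then show ?thesis
    by (rule bij_betw_same_card)
qed

lemma card_translates_containing_pair:
  fixes D :: "'g::ab_group_add set"
  assumes "x \<noteq> y"
  shows "card {g. x - g \<in> D \<and> y - g \<in> D} = diff_mult D (x - y)"
proof -
  have "bij_betw (\<lambda>g. (x - g, y - g)) {g. x - g \<in> D \<and> y - g \<in> D}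
          {(a, b). a \<in> D \<and> b \<in> D \<and> a \<noteq> b \<and> a - b = x - y}"
    by (rule bij_betw_byWitness[where f' = "\<lambda>(a, b). x - a"]) (auto simp: assms algebra_simps)
  then show ?thesis
    unfolding diff_mult_def by (rule bij_betw_same_card)
qed

lemma sum_diff_mult:
  fixes D :: "'g::{ab_group_add,finite} set"
  shows "(\<Sum>g\<in>-{0}. diff_mult D g) = card D * (card D - 1)"
proof -
  define P where "P = {(x, y). x \<in> D \<and> y \<in> D \<and> x \<noteq> y}"
  have "(\<lambda>(x, y). x - y) ` P \<subseteq> -{0}"
    by (auto simp: P_def)
  then have "(\<Sum>g\<in>-{0}. card {p\<in>P. (\<lambda>(x, y). x - y) p = g}) = card P"
    using sum.group[of P "-{0}" "\<lambda>(x, y). x - y" "\<lambda>_. 1 :: nat"] by simp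
  moreover have "{p\<in>P. (\<lambda>(x, y). x - y) p = g} = {(x, y). x \<in> D \<and> y \<in> D \<and> x \<noteq> y \<and> x - y = g}"
    for g by (auto simp: P_def)
  moreover have "P = D \<times> D - (\<lambda>x. (x, x)) ` D"
    by (auto simp: P_def)
  then have "card P = card D * card D - card D"
    by (simp add: card_Diff_subset card_image inj_on_def card_cartesian_product subset_eq)
  ultimately show ?thesis
    by (simp add: diff_mult_def diff_mult_distrib2)
qed

lemma difference_family_diff_mult:
  assumes "difference_family Ds v k lam" and "g \<noteq> 0"
  shows "(\<Sum>D\<leftarrow>Ds. diff_mult D g) = lam"
  using assms by (simp add: difference_family_def diff_mult_def)

lemma sum_sum_list_swap:
  "(\<Sum>x\<in>A. \<Sum>y\<leftarrow>ys. h x y) = (\<Sum>y\<leftarrow>ys. \<Sum>x\<in>A. h x y)"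
  by (induction ys) (simp_all add: sum.distrib)

lemma difference_family_count:
  fixes Ds :: "'g::{ab_group_add,finite} set list"
  assumes "difference_family Ds v k lam"
  shows "length Ds * (k * (k - 1)) = (v - 1) * lam"
proof -
  have v: "v = card (UNIV :: 'g set)" and blocks: "\<forall>D\<in>set Ds. card D = k"
    using assms by (simp_all add: difference_family_def)
  have "(v - 1) * lam = (\<Sum>g\<in>-{0::'g}. \<Sum>D\<leftarrow>Ds. diff_mult D g)"
    using assms by (simp add: difference_family_diff_mult v Compl_eq_Diff_UNIV card_Diff_subset)
  also have "\<dots> = (\<Sum>D\<leftarrow>Ds. card D * (card D - 1))"
    by (simp add: sum_sum_list_swap sum_diff_mult)
  also have "\<dots> = length Ds * (k * (k - 1))"
    using blocks by (simp add: map_idI sum_list_triv cong: map_cong)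
  finally show ?thesis
    by simp
qed

lemma difference_family_length:
  assumes "difference_family Ds v k lam" and "2 \<le> k"
  shows "real (length Ds) = real lam * (real v - 1) / (real k ^ 2 - real k)"
proof -
  have "v \<ge> 1"
    using assms(1) by (simp add: difference_family_def Suc_le_eq finite_UNIV_card_ge_0)
  then have "real (length Ds) * (real k ^ 2 - real k) = real lam * (real v - 1)"
    using arg_cong[OF difference_family_count[OF assms(1)], of real] assms(2)
    by (simp add: of_nat_diff power2_eq_square algebra_simps)
  moreover have "real k ^ 2 - real k > 0"
    using assms(2) by (simp add: power2_eq_square)
  ultimately show ?thesis
    by (simp add: eq_divide_eq)
qed

lemma perfect_secrecy_if_key_weight_independent:
  assumes "sum pS S = 1"
    and "\<And>s m. s \<in> S \<Longrightarrow> m \<in> M \<Longrightarrow> (\<Sum>e\<in>{e\<in>E. f e s = m}. pE e) = w m"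
  shows "perfect_secrecy S M E f pS pE"
  unfolding perfect_secrecy_def
proof (intro ballI impI)
  fix s m
  assume s: "s \<in> S" and m: "m \<in> M" and pos: "msg_prob S E f pS pE m > 0"
  have joint: "joint_prob S E f pS pE s' m = pS s' * w m" if "s' \<in> S" for s'
    using assms(2)[OF that m] by (simp add: joint_prob_def)
  have "msg_prob S E f pS pE m = w m"
    using assms(1) by (simp add: msg_prob_def joint sum_distrib_right[symmetric])
  then show "joint_prob S E f pS pE s m / msg_prob S E f pS pE m = pS s"
    using pos by (simp add: joint[OF s])
qed

lemma spoof_strategies_nonempty:
  assumes "finite M" and "i < card M"
  shows "spoof_strategies M i \<noteq> {}"
proof -
  have avail: "\<exists>m. m \<in> M - X" if "X \<subseteq> M" and "card X = i" for X
  proof (rule ccontr)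
    assume "\<nexists>m. m \<in> M - X"
    then have "X = M"
      using that(1) by blast
    with that(2) assms(2) show False
      by simp
  qed
  have "(\<lambda>X. SOME m. m \<in> M - X) \<in> spoof_strategies M i"
    unfolding spoof_strategies_def
  proof (intro CollectI allI impI)
    fix X
    assume "X \<subseteq> M \<and> card X = i"
    with avail have "\<exists>m. m \<in> M - X"
      by blast
    then show "(SOME m. m \<in> M - X) \<in> M - X"
      by (rule someI_ex)
  qed
  then show ?thesis
    by blast
qed

lemma deception_prob_eqI:
  assumes "spoof_strategies M i \<noteq> {}"
    and "\<And>\<sigma>. \<sigma> \<in> spoof_strategies M i \<Longrightarrow> spoof_success S E f pE i \<sigma> = p"
  shows "deception_prob S M E f pE i = p"
proof -
  have "deception_prob S M E f pE i = (SUP \<sigma>\<in>spoof_strategies M i. p)"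
    unfolding deception_prob_def using assms(2) by (rule SUP_cong[OF refl])
  also have "\<dots> = p"
    using assms(1) by simp
  finally show ?thesis .
qed

lemma card_filter_eq_sum:
  assumes "finite A"
  shows "of_nat (card {x\<in>A. P x}) = (\<Sum>x\<in>A. if P x then 1 else 0 :: 'a::semiring_1)"
  using sum.inter_filter[OF assms, of "\<lambda>_. 1 :: 'a" P] by simp

lemma sum_card_filter_swap:
  assumes "finite A" and "finite B"
  shows "(\<Sum>a\<in>A. card {b\<in>B. P a b}) = (\<Sum>b\<in>B. card {a\<in>A. P a b})"
proof -
  have "card {b\<in>B. P a b} = (\<Sum>b\<in>B. if P a b then 1 else 0)" for a
    using card_filter_eq_sum[OF assms(2), where 'a = nat] by simp
  moreover have "card {a\<in>A. P a b} = (\<Sum>a\<in>A. if P a b then 1 else 0)" for b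
    using card_filter_eq_sum[OF assms(1), where 'a = nat] by simp
  ultimately show ?thesis
    by (simp only: sum.swap[of _ A])
qed

lemma spoof_success_order0:
  assumes "finite S" and "finite E"
  shows "spoof_success S E f (\<lambda>e. 1 / real (card E)) 0 \<sigma>
           = real (card {e\<in>E. \<sigma> {} \<in> valid_msgs S f e}) / real (card E)"
proof -
  have "{T. T \<subseteq> S \<and> card T = 0} = {{}}"
    using assms(1) by (auto dest: finite_subset)
  then show ?thesis
    using assms(2)
    by (simp add: spoof_success_def sum_divide_distrib[symmetric] flip: sum.inter_filter)
qed

lemma spoof_success_order1_as_hits:
  assumes "finite S"
  shows "spoof_success S E f (\<lambda>e. 1 / real (card E)) 1 \<sigma>
      = (\<Sum>e\<in>E. real (card {s\<in>S. \<sigma> {f e s} \<in> valid_msgs S f e})) / (real (card E) * real (card S))"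
proof -
  have "{T. T \<subseteq> S \<and> card T = 1} = (\<lambda>s. {s}) ` S"
    by (auto simp: card_1_singleton_iff)
  then have "spoof_success S E f (\<lambda>e. 1 / real (card E)) 1 \<sigma>
      = (\<Sum>e\<in>E. 1 / real (card E) * (1 / real (card S) * (\<Sum>s\<in>S. if \<sigma> {f e s} \<in> valid_msgs S f e then 1 else 0)))"
    by (simp add: spoof_success_def sum.reindex sum_distrib_left)
  also have "\<dots> = (\<Sum>e\<in>E. real (card {s\<in>S. \<sigma> {f e s} \<in> valid_msgs S f e})) / (real (card E) * real (card S))"
    by (simp add: card_filter_eq_sum[OF assms] sum_divide_distrib mult.commute)
  finally show ?thesis .
qed

lemma spoof_success_order1_balanced:
  assumes "auth_system S M E f" and "\<sigma> \<in> spoof_strategies M 1"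
    and "\<And>m m'. m \<in> M \<Longrightarrow> m' \<in> M \<Longrightarrow> m \<noteq> m' \<Longrightarrow>
           card {e\<in>E. m \<in> valid_msgs S f e \<and> m' \<in> valid_msgs S f e} = r"
  shows "spoof_success S E f (\<lambda>e. 1 / real (card E)) 1 \<sigma>
           = real (card M) * real r / (real (card E) * real (card S))"
proof -
  have fin: "finite S" "finite M" "finite E"
    using assms(1) by (simp_all add: auth_system_def)
  have hits: "card {s\<in>S. \<sigma> {f e s} \<in> valid_msgs S f e}
      = card {m\<in>M. m \<in> valid_msgs S f e \<and> \<sigma> {m} \<in> valid_msgs S f e}" if "e \<in> E" for e
  proof -
    have "{m\<in>M. m \<in> valid_msgs S f e \<and> \<sigma> {m} \<in> valid_msgs S f e}
        = f e ` {s\<in>S. \<sigma> {f e s} \<in> valid_msgs S f e}"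
      using assms(1) that by (auto simp: auth_system_def valid_msgs_def)
    moreover have "inj_on (f e) S"
      using assms(1) that by (simp add: auth_system_def)
    ultimately show ?thesis
      by (simp add: card_image inj_on_subset)
  qed
  have forged: "\<sigma> {m} \<in> M - {m}" if "m \<in> M" for m
  proof -
    have "{m} \<subseteq> M \<and> card {m} = 1"
      using that by simp
    then show ?thesis
      using assms(2) unfolding spoof_strategies_def by blast
  qed
  have "(\<Sum>e\<in>E. card {s\<in>S. \<sigma> {f e s} \<in> valid_msgs S f e})
      = (\<Sum>e\<in>E. card {m\<in>M. m \<in> valid_msgs S f e \<and> \<sigma> {m} \<in> valid_msgs S f e})"
    using hits by (rule sum.cong[OF refl])
  also have "\<dots> = (\<Sum>m\<in>M. card {e\<in>E. m \<in> valid_msgs S f e \<and> \<sigma> {m} \<in> valid_msgs S f e})"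
    using fin by (intro sum_card_filter_swap)
  also have "\<dots> = (\<Sum>m\<in>M. r)"
  proof (rule sum.cong[OF refl])
    fix m
    assume m: "m \<in> M"
    then have "\<sigma> {m} \<in> M" and "m \<noteq> \<sigma> {m}"
      using forged[OF m] by auto
    with m show "card {e\<in>E. m \<in> valid_msgs S f e \<and> \<sigma> {m} \<in> valid_msgs S f e} = r"
      by (rule assms(3))
  qed
  finally have count: "(\<Sum>e\<in>E. card {s\<in>S. \<sigma> {f e s} \<in> valid_msgs S f e}) = card M * r"
    by simp
  then have "(\<Sum>e\<in>E. real (card {s\<in>S. \<sigma> {f e s} \<in> valid_msgs S f e})) = real (card M) * real r"
    by (simp flip: of_nat_sum)
  then show ?thesis
    using spoof_success_order1_as_hits[OF fin(1), of E f \<sigma>] by simp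
qed

lemma onefold_secure_if_balanced:
  assumes auth: "auth_system S M E f"
    and "E \<noteq> {}" and "S \<noteq> {}" and "2 \<le> card M"
    and point: "\<And>m. m \<in> M \<Longrightarrow> card {e\<in>E. m \<in> valid_msgs S f e} = r"
    and pair: "\<And>m m'. m \<in> M \<Longrightarrow> m' \<in> M \<Longrightarrow> m \<noteq> m' \<Longrightarrow>
                 card {e\<in>E. m \<in> valid_msgs S f e \<and> m' \<in> valid_msgs S f e} = lam"
    and replication: "r * card M = card E * card S"
    and balance: "lam * card M * (card M - 1) = card E * card S * (card S - 1)"
  shows "t_fold_secure S M E f (\<lambda>e. 1 / real (card E)) 1"
proof -
  have fin: "finite S" "finite M" "finite E"
    using auth by (simp_all add: auth_system_def)
  have pos: "real (card E) > 0" "real (card S) > 0" "real (card M) > 1"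
    using fin assms(2-4) by (auto simp: card_gt_0_iff)
  have replication_real: "real r * real (card M) = real (card E) * real (card S)"
    using arg_cong[OF replication, of real] by simp
  have balance_real: "real lam * real (card M) * (real (card M) - 1)
      = real (card E) * real (card S) * (real (card S) - 1)"
    using arg_cong[OF balance, of real] pos by (simp add: of_nat_diff)
  have "deception_prob S M E f (\<lambda>e. 1 / real (card E)) 0 = real (card S) / real (card M)"
  proof (rule deception_prob_eqI)
    show "spoof_strategies M 0 \<noteq> {}"
      using fin(2) assms(4) by (intro spoof_strategies_nonempty) auto
    fix \<sigma>
    assume "\<sigma> \<in> spoof_strategies M 0"
    then have "\<sigma> {} \<in> M"
      by (auto simp: spoof_strategies_def)
    then have "spoof_success S E f (\<lambda>e. 1 / real (card E)) 0 \<sigma> = real r / real (card E)"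
      by (simp add: spoof_success_order0 fin point)
    also have "\<dots> = real (card S) / real (card M)"
      using replication_real pos by (simp add: frac_eq_eq algebra_simps)
    finally show "spoof_success S E f (\<lambda>e. 1 / real (card E)) 0 \<sigma> = real (card S) / real (card M)" .
  qed
  moreover have "deception_prob S M E f (\<lambda>e. 1 / real (card E)) 1
      = (real (card S) - 1) / (real (card M) - 1)"
  proof (rule deception_prob_eqI)
    show "spoof_strategies M 1 \<noteq> {}"
      using fin(2) assms(4) by (intro spoof_strategies_nonempty) auto
    fix \<sigma>
    assume "\<sigma> \<in> spoof_strategies M 1"
    from auth this pair have "spoof_success S E f (\<lambda>e. 1 / real (card E)) 1 \<sigma>
        = real (card M) * real lam / (real (card E) * real (card S))"
      by (rule spoof_success_order1_balanced)
    also have "\<dots> = (real (card S) - 1) / (real (card M) - 1)"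
      using balance_real pos by (simp add: field_simps)
    finally show "spoof_success S E f (\<lambda>e. 1 / real (card E)) 1 \<sigma>
        = (real (card S) - 1) / (real (card M) - 1)" .
  qed
  ultimately show ?thesis
    unfolding t_fold_secure_def by (auto simp: le_Suc_eq)
qed

lemma optimal_auth_iff:
  assumes "2 \<le> card S" and "2 \<le> card M"
    and "real (card E) = real lam * real (card M) * (real (card M) - 1) / (real (card S) ^ 2 - real (card S))"
  shows "optimal_auth S M E \<longleftrightarrow> lam = 1"
proof -
  have choose_two: "real (n choose 2) = real n * (real n - 1) / 2" for n
    by (simp add: binomial_gbinomial gbinomial_altdef_of_nat numeral_2_eq_2 prod.atLeast0_lessThan_Suc)
  define P where "P = real (card M) * (real (card M) - 1)"
  define K where "K = real (card S) * (real (card S) - 1)"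
  have "P > 0" and "K > 0"
    using assms(1,2) by (simp_all add: P_def K_def)
  have "real (card E) = real lam * P / K"
    using assms(3) by (simp add: P_def K_def power2_eq_square algebra_simps)
  then have "optimal_auth S M E \<longleftrightarrow> real lam * P / K = (P / 2) / (K / 2)"
    unfolding optimal_auth_def choose_two P_def K_def by simp
  also have "\<dots> \<longleftrightarrow> lam = 1"
    using \<open>P > 0\<close> \<open>K > 0\<close> by (simp add: field_simps)
  finally show ?thesis .
qed

(* Keys and messages have to be natural numbers: key i g codes the translate D_i + g, the
   message code x codes the group element x, and d i enumerates the block D_i. *)
locale development_encoding =
  fixes Ds :: "'g::{ab_group_add,finite} set list" and k :: nat
    and code :: "'g \<Rightarrow> nat" and d :: "nat \<Rightarrow> nat \<Rightarrow> 'g"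
  assumes bij_code: "bij_betw code UNIV {..<CARD('g)}"
    and bij_d: "\<And>i. i < length Ds \<Longrightarrow> bij_betw (d i) {..<k} (Ds ! i)"
begin

definition key :: "nat \<Rightarrow> 'g \<Rightarrow> nat" where
  "key i g = i * CARD('g) + code g"

definition keys :: "nat set" where
  "keys = (\<lambda>(i, g). key i g) ` ({..<length Ds} \<times> UNIV)"

definition rule :: "nat \<Rightarrow> nat \<Rightarrow> nat" where
  "rule e s = code (d (e div CARD('g)) s + inv code (e mod CARD('g)))"

lemma code_less: "code g < CARD('g)"
  using bij_betwE[OF bij_code] by blast

lemma range_code: "range code = {..<CARD('g)}"
  using bij_code by (simp add: bij_betw_def)

lemma inj_code: "inj code"
  using bij_code by (simp add: bij_betw_def)

lemma key_div: "key i g div CARD('g) = i"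
  and key_mod: "key i g mod CARD('g) = code g"
  using code_less[of g] by (simp_all add: key_def)

lemma rule_key [simp]: "rule (key i g) s = code (d i s + g)"
  by (simp add: rule_def key_div key_mod inj_code)

lemma key_eq_iff: "key i g = key j h \<longleftrightarrow> i = j \<and> g = h"
proof
  assume eq: "key i g = key j h"
  have "i = j"
    using key_div[of i g] key_div[of j h] by (simp add: eq)
  moreover have "code g = code h"
    using key_mod[of i g] key_mod[of j h] by (simp add: eq)
  ultimately show "i = j \<and> g = h"
    by (simp add: inj_code inj_eq)
qed simp

lemma inj_key: "inj (\<lambda>(i, g). key i g)"
  by (rule injI) (auto simp: key_eq_iff)

lemma card_keys_filter: "card {e\<in>keys. P e} = (\<Sum>i<length Ds. card {g. P (key i g)})"
proof -
  have "{e\<in>keys. P e} = (\<lambda>(i, g). key i g) ` (SIGMA i:{..<length Ds}. {g. P (key i g)})"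
    by (auto simp: keys_def)
  then show ?thesis
    by (simp add: card_image inj_on_subset[OF inj_key])
qed

lemma card_keys: "card keys = length Ds * CARD('g)"
  using card_keys_filter[of "\<lambda>_. True"] by simp

lemma card_block: "i < length Ds \<Longrightarrow> card (Ds ! i) = k"
  using bij_betw_same_card[OF bij_d] by simp

lemma code_mem_valid_key:
  assumes "i < length Ds"
  shows "code x \<in> valid_msgs {..<k} rule (key i g) \<longleftrightarrow> x - g \<in> Ds ! i"
proof -
  have "code x \<in> valid_msgs {..<k} rule (key i g) \<longleftrightarrow> x - g \<in> d i ` {..<k}"
    by (simp add: valid_msgs_def image_iff inj_code inj_eq diff_eq_eq)
  also have "d i ` {..<k} = Ds ! i"
    using bij_d[OF assms] by (simp add: bij_betw_def)
  finally show ?thesis .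
qed

lemma auth_system: "auth_system {..<k} {..<CARD('g)} keys rule"
  unfolding auth_system_def
proof (intro conjI ballI)
  fix e
  assume "e \<in> keys"
  then obtain i g where i: "i < length Ds" and e: "e = key i g"
    by (auto simp: keys_def)
  have "inj_on (d i) {..<k}"
    using bij_d[OF i] by (simp add: bij_betw_def)
  then show "inj_on (rule e) {..<k}"
    unfolding e inj_on_def by (simp add: inj_code inj_eq)
  show "rule e ` {..<k} \<subseteq> {..<CARD('g)}"
    unfolding e using code_less by auto
qed (simp_all add: keys_def)

lemma card_keys_sending: "card {e\<in>keys. rule e s = code x} = length Ds"
proof -
  have "{g. rule (key i g) s = code x} = {x - d i s}" for i
    by (auto simp: inj_code inj_eq)
  then show ?thesis
    by (simp add: card_keys_filter)
qed

lemma card_keys_valid: "card {e\<in>keys. code x \<in> valid_msgs {..<k} rule e} = length Ds * k"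
proof -
  have "card {g. code x \<in> valid_msgs {..<k} rule (key i g)} = k" if "i < length Ds" for i
    using that by (simp add: code_mem_valid_key card_translates_containing card_block)
  then show ?thesis
    by (simp add: card_keys_filter)
qed

lemma card_keys_valid_pair:
  assumes "x \<noteq> y"
  shows "card {e\<in>keys. code x \<in> valid_msgs {..<k} rule e \<and> code y \<in> valid_msgs {..<k} rule e}
           = (\<Sum>D\<leftarrow>Ds. diff_mult D (x - y))"
proof -
  have "card {g. code x \<in> valid_msgs {..<k} rule (key i g) \<and> code y \<in> valid_msgs {..<k} rule (key i g)}
      = diff_mult (Ds ! i) (x - y)" if "i < length Ds" for i
    using that assms by (simp add: code_mem_valid_key card_translates_containing_pair)
  then show ?thesis
    by (simp add: card_keys_filter sum_list_sum_nth atLeast0LessThan)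
qed

lemma perfect_secrecy:
  assumes "0 < k"
  shows "perfect_secrecy {..<k} {..<CARD('g)} keys rule
           (\<lambda>s. 1 / real (card {..<k})) (\<lambda>e. 1 / real (card keys))"
proof (rule perfect_secrecy_if_key_weight_independent)
  show "(\<Sum>s\<in>{..<k}. 1 / real (card {..<k})) = 1"
    using assms by simp
  fix s m
  assume "m \<in> {..<CARD('g)}"
  then obtain x where "m = code x"
    using range_code by blast
  then show "(\<Sum>e\<in>{e\<in>keys. rule e s = m}. 1 / real (card keys)) = real (length Ds) / real (card keys)"
    by (simp add: card_keys_sending)
qed

lemma onefold_secure:
  assumes df: "difference_family Ds v k lam" and "2 \<le> k" and "k \<le> v"
  shows "t_fold_secure {..<k} {..<v} keys rule (\<lambda>e. 1 / real (card keys)) 1"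
proof -
  have v: "v = CARD('g)" and "Ds \<noteq> []"
    using df by (simp_all add: difference_family_def)
  have messages: "{..<v} = range code"
    by (simp add: v range_code)
  show ?thesis
  proof (rule onefold_secure_if_balanced[where r = "length Ds * k" and lam = lam])
    show "auth_system {..<k} {..<v} keys rule"
      using auth_system by (simp add: v)
    show "keys \<noteq> {}"
      using \<open>Ds \<noteq> []\<close> card_keys by auto
    show "{..<k} \<noteq> {}" and "2 \<le> card {..<v}"
      using assms(2,3) by (auto simp: lessThan_empty_iff)
    show "card {e\<in>keys. m \<in> valid_msgs {..<k} rule e} = length Ds * k" if "m \<in> {..<v}" for m
      using that card_keys_valid by (auto simp: messages)
    show "card {e\<in>keys. m \<in> valid_msgs {..<k} rule e \<and> m' \<in> valid_msgs {..<k} rule e} = lam"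
      if "m \<in> {..<v}" and "m' \<in> {..<v}" and distinct: "m \<noteq> m'" for m m'
    proof -
      from that obtain x y where m: "m = code x" and m': "m' = code y"
        unfolding messages by blast
      with distinct have "x \<noteq> y"
        by blast
      then show ?thesis
        using card_keys_valid_pair difference_family_diff_mult[OF df] by (simp add: m m')
    qed
    show "length Ds * k * card {..<v} = card keys * card {..<k}"
      by (simp add: card_keys v)
    have "lam * card {..<v} * (card {..<v} - 1) = v * ((v - 1) * lam)"
      by (simp add: ac_simps)
    also have "\<dots> = v * (length Ds * (k * (k - 1)))"
      using difference_family_count[OF df] by simp
    also have "\<dots> = card keys * card {..<k} * (card {..<k} - 1)"
      by (simp add: card_keys v ac_simps)
    finally show "lam * card {..<v} * (card {..<v} - 1) = card keys * card {..<k} * (card {..<k} - 1)" .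
  qed
qed

end

theorem mainTheorem3:
  fixes Ds :: "'g::{ab_group_add,finite} set list"
    and v k lam :: nat
  assumes "difference_family Ds v k lam"
    and "2 \<le> k" and "k \<le> v"
  shows "\<exists>(S::nat set) (M::nat set) (E::nat set) (f::nat \<Rightarrow> nat \<Rightarrow> nat).
           auth_system S M E f \<and>
           card S = k \<and> card M = v \<and>
           real (card E) = real lam * real v * (real v - 1) / (real k ^ 2 - real k) \<and>
           perfect_secrecy S M E f (\<lambda>s. 1 / real (card S)) (\<lambda>e. 1 / real (card E)) \<and>
           t_fold_secure S M E f (\<lambda>e. 1 / real (card E)) 1 \<and>
           (optimal_auth S M E \<longleftrightarrow> lam = 1)"
proof -
  have v: "v = CARD('g)" and blocks: "\<forall>D\<in>set Ds. card D = k"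
    using assms(1) by (simp_all add: difference_family_def)
  obtain code :: "'g \<Rightarrow> nat" where "bij_betw code UNIV {..<CARD('g)}"
    using ex_bij_betw_finite_nat[of "UNIV :: 'g set"] by (auto simp: atLeast0LessThan)
  moreover have "\<forall>i. \<exists>h. i < length Ds \<longrightarrow> bij_betw h {..<k} (Ds ! i)"
    using blocks ex_bij_betw_nat_finite by (metis atLeast0LessThan finite nth_mem)
  then obtain d where "\<And>i. i < length Ds \<Longrightarrow> bij_betw (d i) {..<k} (Ds ! i)"
    by metis
  ultimately interpret dev: development_encoding Ds k code d
    by unfold_locales
  have card_E: "real (card dev.keys) = real lam * real v * (real v - 1) / (real k ^ 2 - real k)"
    using difference_family_length[OF assms(1,2)] by (simp add: dev.card_keys v)
  show ?thesis
  proof (intro exI conjI)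
    show "auth_system {..<k} {..<v} dev.keys dev.rule"
      using dev.auth_system by (simp add: v)
    show "perfect_secrecy {..<k} {..<v} dev.keys dev.rule (\<lambda>s. 1 / real (card {..<k})) (\<lambda>e. 1 / real (card dev.keys))"
      using dev.perfect_secrecy assms(2) by (simp add: v)
    show "t_fold_secure {..<k} {..<v} dev.keys dev.rule (\<lambda>e. 1 / real (card dev.keys)) 1"
      using assms by (rule dev.onefold_secure)
    show "optimal_auth {..<k} {..<v} dev.keys \<longleftrightarrow> lam = 1"
      using assms(2,3) card_E by (intro optimal_auth_iff) auto
  qed (simp_all add: card_E)
qed

end
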